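(* Let $K$ be an algebraically closed field of characteristic zero, $\deg_1$ the standard homogeneous degree on $K[x_1,\dots,x_n]$, $\Phi=(f_1,\dots,f_n)$ a polynomial automorphism of $K^n$, and $I=\{Q : Q(\overline{f_1},\dots,\overline{f_n})=0\}$ where $\overline{f_i}$ is the homogeneous component of highest degree of $f_i$. Then $I=(0)$ if and only if $\Phi$ is affine, i.e. $\deg_1(f_i)=1$ for all $i=1,\dots,n$. *)

theory Defs
  imports "HOL-Library.Poly_Mapping" "HOL-Computational_Algebra.Polynomial"
begin

text \<open>K[x_1..x_n] corresponds to those polynomials whose variables lie in {..<n}.\<close>

type_synonym 'a mpoly = "(nat \<Rightarrow>\<^sub>0 nat) \<Rightarrow>\<^sub>0 'a"

definition mpoly_const :: "'a::zero \<Rightarrow> 'a mpoly" where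
  "mpoly_const c = Poly_Mapping.single 0 c"

definition mpoly_var :: "nat \<Rightarrow> 'a::{zero,one} mpoly" where
  "mpoly_var i = Poly_Mapping.single (Poly_Mapping.single i 1) 1"

definition mpoly_vars :: "'a::zero mpoly \<Rightarrow> nat set" where
  "mpoly_vars p = (\<Union>m\<in>Poly_Mapping.keys p. Poly_Mapping.keys m)"

text \<open>Standard (total) degree of a monomial and of a polynomial (deg_1); deg 0 = 0 by convention.\<close>
definition mon_deg :: "(nat \<Rightarrow>\<^sub>0 nat) \<Rightarrow> nat" where
  "mon_deg m = (\<Sum>i\<in>Poly_Mapping.keys m. Poly_Mapping.lookup m i)"

definition total_degree :: "'a::zero mpoly \<Rightarrow> nat" where
  "total_degree p = Max (insert 0 (mon_deg ` Poly_Mapping.keys p))"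

definition top_component :: "'a::zero mpoly \<Rightarrow> 'a mpoly" where
  "top_component p =
     Abs_poly_mapping (\<lambda>m. if mon_deg m = total_degree p then Poly_Mapping.lookup p m else 0)"

definition mpoly_subst :: "'a::comm_ring_1 mpoly \<Rightarrow> (nat \<Rightarrow> 'a mpoly) \<Rightarrow> 'a mpoly" where
  "mpoly_subst Q g =
     (\<Sum>m\<in>Poly_Mapping.keys Q. mpoly_const (Poly_Mapping.lookup Q m) * (\<Prod>i\<in>Poly_Mapping.keys m. g i ^ Poly_Mapping.lookup m i))"

definition poly_automorphism :: "nat \<Rightarrow> (nat \<Rightarrow> 'a::comm_ring_1 mpoly) \<Rightarrow> bool" where
  "poly_automorphism n f \<longleftrightarrow>
     (\<forall>i<n. mpoly_vars (f i) \<subseteq> {..<n}) \<and>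
     (\<exists>g. (\<forall>i<n. mpoly_vars (g i) \<subseteq> {..<n}) \<and>
          (\<forall>i<n. mpoly_subst (g i) f = mpoly_var i) \<and>
          (\<forall>i<n. mpoly_subst (f i) g = mpoly_var i))"

end

theory Submission
  imports Defs
begin

text \<open>If the leading forms of \<open>f\<close> are algebraically independent, substituting \<open>f\<close> preserves
  weighted degrees, \<open>x\<^sub>j\<close> having weight \<open>deg f\<^sub>j\<close>: the top weighted part of \<open>Q\<close> would
  otherwise be a relation between the leading forms. For the inverse \<open>g\<close> this means that every
  monomial of every \<open>g\<^sub>i\<close> has weight at most \<open>deg x\<^sub>i = 1\<close>, so a variable \<open>x\<^sub>k\<close> with
  \<open>deg f\<^sub>k \<ge> 2\<close> occurs in no \<open>g\<^sub>i\<close>, contradicting \<open>f\<^sub>k(g) = x\<^sub>k\<close>; and no \<open>f\<^sub>k\<close> is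
  constant. Conversely, leading forms of affine \<open>f\<^sub>i\<close> are the translates \<open>f\<^sub>i - f\<^sub>i(0)\<close>,
  which inherit algebraic independence from the invertible \<open>f\<close>.\<close>

section \<open>Substitution\<close>

definition mon_subst :: "(nat \<Rightarrow> 'a::comm_ring_1 mpoly) \<Rightarrow> (nat \<Rightarrow>\<^sub>0 nat) \<Rightarrow> 'a mpoly" where
  "mon_subst g m = (\<Prod>i\<in>Poly_Mapping.keys m. g i ^ Poly_Mapping.lookup m i)"

lemma mpoly_subst_eq_sum_mon_subst:
  "mpoly_subst Q g =
     (\<Sum>m\<in>Poly_Mapping.keys Q. mpoly_const (Poly_Mapping.lookup Q m) * mon_subst g m)"
  by (simp add: mpoly_subst_def mon_subst_def)

lemma lookup_mpoly_const: "Poly_Mapping.lookup (mpoly_const c) m = (if m = 0 then c else 0)"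
  by (simp add: mpoly_const_def lookup_single when_def)

lemma mpoly_const_mult: "mpoly_const (a * b) = mpoly_const a * (mpoly_const b :: 'a::comm_ring_1 mpoly)"
  by (simp add: mpoly_const_def mult_single)

lemma keys_mpoly_var: "Poly_Mapping.keys (mpoly_var i :: 'a::comm_ring_1 mpoly) = {Poly_Mapping.single i 1}"
  by (simp add: mpoly_var_def)

lemma keys_add_nat:
  "Poly_Mapping.keys (m + m' :: 'k \<Rightarrow>\<^sub>0 nat) = Poly_Mapping.keys m \<union> Poly_Mapping.keys m'"
  by (auto simp: in_keys_iff lookup_add)

lemma sum_single_lookup: "(\<Sum>m\<in>Poly_Mapping.keys p. Poly_Mapping.single m (Poly_Mapping.lookup p m)) = p"
  by (rule poly_mapping_eqI) (simp add: lookup_sum lookup_single when_def in_keys_iff)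

lemma mult_eq_sum_single:
  fixes p q :: "'k::comm_monoid_add \<Rightarrow>\<^sub>0 'c::comm_semiring_0"
  shows "p * q = (\<Sum>m\<in>Poly_Mapping.keys p. \<Sum>m'\<in>Poly_Mapping.keys q.
     Poly_Mapping.single (m + m') (Poly_Mapping.lookup p m * Poly_Mapping.lookup q m'))"
proof -
  have "p * q = (\<Sum>m\<in>Poly_Mapping.keys p. Poly_Mapping.single m (Poly_Mapping.lookup p m)) *
     (\<Sum>m\<in>Poly_Mapping.keys q. Poly_Mapping.single m (Poly_Mapping.lookup q m))"
    by (simp only: sum_single_lookup)
  thus ?thesis by (simp add: sum_product mult_single)
qed

lemma mon_subst_superset:
  assumes "finite S" "Poly_Mapping.keys m \<subseteq> S"
  shows "mon_subst g m = (\<Prod>i\<in>S. g i ^ Poly_Mapping.lookup m i)"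
  unfolding mon_subst_def
  by (rule prod.mono_neutral_left) (use assms in \<open>auto simp: in_keys_iff\<close>)

lemma mon_subst_add: "mon_subst g (m + m') = mon_subst g m * mon_subst g m'"
proof -
  let ?S = "Poly_Mapping.keys m \<union> Poly_Mapping.keys m'"
  have "mon_subst g (m + m') = (\<Prod>i\<in>?S. g i ^ Poly_Mapping.lookup (m + m') i)"
    by (rule mon_subst_superset) (auto simp: keys_add_nat)
  also have "\<dots> = (\<Prod>i\<in>?S. g i ^ Poly_Mapping.lookup m i) * (\<Prod>i\<in>?S. g i ^ Poly_Mapping.lookup m' i)"
    by (simp add: lookup_add power_add prod.distrib)
  also have "\<dots> = mon_subst g m * mon_subst g m'"
    by (subst (1 2) mon_subst_superset[where S = ?S]) auto
  finally show ?thesis .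
qed

lemma mpoly_subst_add: "mpoly_subst (p + q) g = mpoly_subst p g + mpoly_subst q g"
  unfolding mpoly_subst_eq_sum_mon_subst
  by (rule setsum_keys_plus_distrib) (simp_all add: mpoly_const_def single_add distrib_right)

lemma mpoly_subst_zero [simp]: "mpoly_subst 0 g = 0"
  by (simp add: mpoly_subst_def)

lemma mpoly_subst_sum: "mpoly_subst (\<Sum>x\<in>S. F x) g = (\<Sum>x\<in>S. mpoly_subst (F x) g)"
  by (induction S rule: infinite_finite_induct) (simp_all add: mpoly_subst_add)

lemma mpoly_subst_single:
  "mpoly_subst (Poly_Mapping.single m c) g = mpoly_const c * mon_subst g m"
  by (simp add: mpoly_subst_eq_sum_mon_subst mpoly_const_def)

lemma mpoly_subst_const [simp]: "mpoly_subst (mpoly_const c) g = mpoly_const c"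
  by (simp add: mpoly_const_def mpoly_subst_single mon_subst_def)

lemma mpoly_subst_var [simp]: "mpoly_subst (mpoly_var i) g = g i"
  by (simp add: mpoly_var_def mpoly_subst_single mon_subst_def mpoly_const_def)

lemma mpoly_subst_one [simp]: "mpoly_subst 1 g = 1"
  using mpoly_subst_const[of 1 g] by (simp add: mpoly_const_def)

lemma mpoly_subst_diff: "mpoly_subst (p - q) g = mpoly_subst p g - mpoly_subst q g"
  by (metis add_diff_cancel diff_add_cancel mpoly_subst_add)

lemma mpoly_subst_mult: "mpoly_subst (p * q) g = mpoly_subst p g * mpoly_subst q g"
proof -
  have "mpoly_subst (p * q) g = (\<Sum>m\<in>Poly_Mapping.keys p. \<Sum>m'\<in>Poly_Mapping.keys q.
     (mpoly_const (Poly_Mapping.lookup p m) * mon_subst g m) *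
     (mpoly_const (Poly_Mapping.lookup q m') * mon_subst g m'))"
    by (subst mult_eq_sum_single)
       (simp add: mpoly_subst_sum mpoly_subst_single mpoly_const_mult mon_subst_add mult_ac)
  also have "\<dots> = mpoly_subst p g * mpoly_subst q g"
    by (simp add: mpoly_subst_eq_sum_mon_subst sum_product)
  finally show ?thesis .
qed

lemma mpoly_subst_power: "mpoly_subst (p ^ k) g = mpoly_subst p g ^ k"
  by (induction k) (simp_all add: mpoly_subst_mult)

lemma mpoly_subst_prod: "mpoly_subst (\<Prod>x\<in>S. F x) g = (\<Prod>x\<in>S. mpoly_subst (F x) g)"
  by (induction S rule: infinite_finite_induct) (simp_all add: mpoly_subst_mult)

lemma mpoly_subst_mon_subst: "mpoly_subst (mon_subst f m) g = mon_subst (\<lambda>i. mpoly_subst (f i) g) m"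
  by (simp add: mon_subst_def mpoly_subst_prod mpoly_subst_power)

lemma mpoly_subst_mpoly_subst:
  "mpoly_subst (mpoly_subst Q f) g = mpoly_subst Q (\<lambda>i. mpoly_subst (f i) g)"
  by (simp add: mpoly_subst_eq_sum_mon_subst[of Q] mpoly_subst_sum mpoly_subst_mult
      mpoly_subst_mon_subst)

lemma mpoly_subst_cong:
  "(\<And>i. i \<in> mpoly_vars Q \<Longrightarrow> g i = g' i) \<Longrightarrow> mpoly_subst Q g = mpoly_subst Q g'"
  unfolding mpoly_subst_def mpoly_vars_def
  by (intro sum.cong refl arg_cong2[where f = "(*)"] prod.cong arg_cong2[where f = "(^)"]) auto

lemma mon_subst_mpoly_var: "mon_subst mpoly_var m = (Poly_Mapping.single m 1 :: 'a::comm_ring_1 mpoly)"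
proof -
  have power: "mpoly_var i ^ k = (Poly_Mapping.single (Poly_Mapping.single i k) 1 :: 'a mpoly)" for i k
    by (induction k) (simp_all add: mpoly_var_def mult_single single_add[symmetric])
  have "(\<Prod>i\<in>S. Poly_Mapping.single (F i) (1::'a)) = Poly_Mapping.single (\<Sum>i\<in>S. F i) 1"
    if "finite S" for S and F :: "nat \<Rightarrow> nat \<Rightarrow>\<^sub>0 nat"
    using that by (induction S rule: finite_induct) (simp_all add: mult_single)
  then show ?thesis
    by (simp add: mon_subst_def power sum_single_lookup)
qed

lemma mpoly_subst_mpoly_var [simp]: "mpoly_subst Q mpoly_var = (Q :: 'a::comm_ring_1 mpoly)"
  by (simp add: mpoly_subst_eq_sum_mon_subst mon_subst_mpoly_var mpoly_const_def mult_single
      sum_single_lookup)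

section \<open>Weighted degrees\<close>

definition wdeg :: "(nat \<Rightarrow> nat) \<Rightarrow> (nat \<Rightarrow>\<^sub>0 nat) \<Rightarrow> nat" where
  "wdeg u m = (\<Sum>i\<in>Poly_Mapping.keys m. u i * Poly_Mapping.lookup m i)"

definition wdeg_le :: "(nat \<Rightarrow> nat) \<Rightarrow> nat \<Rightarrow> 'a::zero mpoly \<Rightarrow> bool" where
  "wdeg_le u d p \<longleftrightarrow> (\<forall>m\<in>Poly_Mapping.keys p. wdeg u m \<le> d)"

definition hom_part :: "(nat \<Rightarrow> nat) \<Rightarrow> nat \<Rightarrow> 'a::zero mpoly \<Rightarrow> 'a mpoly" where
  "hom_part u d p = Abs_poly_mapping (\<lambda>m. if wdeg u m = d then Poly_Mapping.lookup p m else 0)"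

lemma wdeg_superset:
  assumes "finite S" "Poly_Mapping.keys m \<subseteq> S"
  shows "wdeg u m = (\<Sum>i\<in>S. u i * Poly_Mapping.lookup m i)"
  unfolding wdeg_def by (rule sum.mono_neutral_left) (use assms in \<open>auto simp: in_keys_iff\<close>)

lemma wdeg_add: "wdeg u (m + m') = wdeg u m + wdeg u m'"
proof -
  let ?S = "Poly_Mapping.keys m \<union> Poly_Mapping.keys m'"
  have "wdeg u (m + m') = (\<Sum>i\<in>?S. u i * Poly_Mapping.lookup (m + m') i)"
    by (rule wdeg_superset) (auto simp: keys_add_nat)
  also have "\<dots> = (\<Sum>i\<in>?S. u i * Poly_Mapping.lookup m i) + (\<Sum>i\<in>?S. u i * Poly_Mapping.lookup m' i)"
    by (simp add: lookup_add algebra_simps sum.distrib)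
  also have "\<dots> = wdeg u m + wdeg u m'"
    by (subst (1 2) wdeg_superset[where S = ?S]) auto
  finally show ?thesis .
qed

lemma wdeg_zero [simp]: "wdeg u 0 = 0"
  by (simp add: wdeg_def)

lemma wdeg_single: "wdeg u (Poly_Mapping.single i k) = u i * k"
  by (simp add: wdeg_def)

lemma wdeg_eq_0_iff: "wdeg u m = 0 \<longleftrightarrow> (\<forall>i\<in>Poly_Mapping.keys m. u i = 0)"
  by (auto simp: wdeg_def in_keys_iff)

lemma weight_le_wdeg: "i \<in> Poly_Mapping.keys m \<Longrightarrow> u i \<le> wdeg u m"
proof -
  assume i: "i \<in> Poly_Mapping.keys m"
  then have "u i \<le> u i * Poly_Mapping.lookup m i"
    by (simp add: in_keys_iff)
  also have "\<dots> \<le> wdeg u m"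
    unfolding wdeg_def using i by (intro member_le_sum) auto
  finally show ?thesis .
qed

lemma mpoly_vars_subset_iff_wdeg_le:
  "mpoly_vars p \<subseteq> A \<longleftrightarrow> wdeg_le (\<lambda>i. if i \<in> A then 0 else 1) 0 p"
  by (auto simp: mpoly_vars_def wdeg_le_def wdeg_eq_0_iff split: if_splits)

lemma wdeg_le_mono: "wdeg_le u a p \<Longrightarrow> a \<le> b \<Longrightarrow> wdeg_le u b p"
  unfolding wdeg_le_def by force

lemma wdeg_le_zero [simp]: "wdeg_le u d 0"
  by (simp add: wdeg_le_def)

lemma wdeg_le_const [simp]: "wdeg_le u 0 (mpoly_const c)"
  by (simp add: wdeg_le_def mpoly_const_def)

lemma wdeg_le_one [simp]: "wdeg_le u 0 1"
  by (simp add: wdeg_le_def)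

lemma wdeg_le_var: "wdeg_le u (u i) (mpoly_var i :: 'a::comm_ring_1 mpoly)"
  by (simp add: wdeg_le_def keys_mpoly_var wdeg_single)

lemma wdeg_le_add: "wdeg_le u d p \<Longrightarrow> wdeg_le u d q \<Longrightarrow> wdeg_le u d (p + q :: 'a::comm_ring_1 mpoly)"
  unfolding wdeg_le_def using keys_add[of p q] by blast

lemma wdeg_le_diff: "wdeg_le u d p \<Longrightarrow> wdeg_le u d q \<Longrightarrow> wdeg_le u d (p - q :: 'a::comm_ring_1 mpoly)"
  unfolding wdeg_le_def using keys_diff[of p q] by blast

lemma wdeg_le_sum:
  "(\<And>x. x \<in> S \<Longrightarrow> wdeg_le u d (F x)) \<Longrightarrow> wdeg_le u d (\<Sum>x\<in>S. F x :: 'a::comm_ring_1 mpoly)"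
  by (induction S rule: infinite_finite_induct) (auto intro: wdeg_le_add)

lemma wdeg_le_mult:
  "wdeg_le u a p \<Longrightarrow> wdeg_le u b q \<Longrightarrow> wdeg_le u (a + b) (p * q :: 'a::comm_ring_1 mpoly)"
  unfolding wdeg_le_def using keys_mult[of p q] by (force simp: wdeg_add intro: add_mono)

lemma lookup_hom_part:
  "Poly_Mapping.lookup (hom_part u d p) m = (if wdeg u m = d then Poly_Mapping.lookup p m else 0)"
proof -
  have "finite {m. (if wdeg u m = d then Poly_Mapping.lookup p m else 0) \<noteq> 0}"
    by (rule finite_subset[of _ "Poly_Mapping.keys p"]) (auto simp: in_keys_iff)
  thus ?thesis by (simp add: hom_part_def)
qed

lemma keys_hom_part_subset: "Poly_Mapping.keys (hom_part u d p) \<subseteq> Poly_Mapping.keys p"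
  by (auto simp: in_keys_iff lookup_hom_part split: if_splits)

lemma hom_part_add: "hom_part u d (p + q) = hom_part u d p + hom_part u d (q :: 'a::monoid_add mpoly)"
  by (rule poly_mapping_eqI) (simp add: lookup_hom_part lookup_add)

lemma hom_part_zero [simp]: "hom_part u d 0 = 0"
  by (rule poly_mapping_eqI) (simp add: lookup_hom_part)

lemma hom_part_sum: "hom_part u d (\<Sum>x\<in>S. F x) = (\<Sum>x\<in>S. hom_part u d (F x :: 'a::comm_monoid_add mpoly))"
  by (induction S rule: infinite_finite_induct) (simp_all add: hom_part_add)

lemma hom_part_single:
  "hom_part u d (Poly_Mapping.single m c) = (if wdeg u m = d then Poly_Mapping.single m c else 0)"
  by (rule poly_mapping_eqI) (simp add: lookup_hom_part lookup_single when_def)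

lemma hom_part_eq_sum_single:
  "hom_part u d p = (\<Sum>m\<in>Poly_Mapping.keys p.
     if wdeg u m = d then Poly_Mapping.single m (Poly_Mapping.lookup p m) else 0)"
  by (subst sum_single_lookup[symmetric]) (simp add: hom_part_sum hom_part_single)

lemma hom_part_eq_0_if_wdeg_le: "wdeg_le u e p \<Longrightarrow> e < d \<Longrightarrow> hom_part u d p = 0"
  by (rule poly_mapping_eqI) (force simp: lookup_hom_part wdeg_le_def in_keys_iff)

lemma hom_part_const [simp]: "hom_part u 0 (mpoly_const c) = mpoly_const c"
  by (simp add: mpoly_const_def hom_part_single)

lemma hom_part_one [simp]: "hom_part u 0 1 = (1 :: 'a::comm_ring_1 mpoly)"
  by (rule poly_mapping_eqI) (simp add: lookup_hom_part lookup_one when_def)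

lemma hom_part_mult:
  fixes p q :: "'a::comm_ring_1 mpoly"
  assumes "wdeg_le u a p" "wdeg_le u b q"
  shows "hom_part u (a + b) (p * q) = hom_part u a p * hom_part u b q"
proof -
  let ?part = "\<lambda>d p m. if wdeg u m = d then Poly_Mapping.single m (Poly_Mapping.lookup p m) else 0"
  have "hom_part u (a + b) (p * q) = (\<Sum>m\<in>Poly_Mapping.keys p. \<Sum>m'\<in>Poly_Mapping.keys q.
     if wdeg u m + wdeg u m' = a + b
     then Poly_Mapping.single (m + m') (Poly_Mapping.lookup p m * Poly_Mapping.lookup q m') else 0)"
    by (subst mult_eq_sum_single) (simp add: hom_part_sum hom_part_single wdeg_add)
  also have "\<dots> = (\<Sum>m\<in>Poly_Mapping.keys p. \<Sum>m'\<in>Poly_Mapping.keys q. ?part a p m * ?part b q m')"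
  proof (intro sum.cong refl)
    fix m m' assume "m \<in> Poly_Mapping.keys p" "m' \<in> Poly_Mapping.keys q"
    then have "wdeg u m \<le> a" "wdeg u m' \<le> b"
      using assms by (auto simp: wdeg_le_def)
    then have "wdeg u m + wdeg u m' = a + b \<longleftrightarrow> wdeg u m = a \<and> wdeg u m' = b"
      by linarith
    then show "(if wdeg u m + wdeg u m' = a + b
       then Poly_Mapping.single (m + m') (Poly_Mapping.lookup p m * Poly_Mapping.lookup q m') else 0) =
       ?part a p m * ?part b q m'"
      by (simp add: mult_single)
  qed
  also have "\<dots> = hom_part u a p * hom_part u b q"
    by (simp add: hom_part_eq_sum_single[of u a p] hom_part_eq_sum_single[of u b q] sum_product)
  finally show ?thesis .
qed

lemma hom_part_power:
  fixes p :: "'a::comm_ring_1 mpoly"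
  assumes "wdeg_le u e p"
  shows "wdeg_le u (k * e) (p ^ k) \<and> hom_part u (k * e) (p ^ k) = hom_part u e p ^ k"
  by (induction k) (simp_all add: hom_part_mult[OF assms] wdeg_le_mult[OF assms])

lemma hom_part_prod:
  fixes P :: "nat \<Rightarrow> 'a::comm_ring_1 mpoly"
  assumes "finite S" "\<And>i. i \<in> S \<Longrightarrow> wdeg_le u (e i) (P i)"
  shows "wdeg_le u (\<Sum>i\<in>S. e i) (\<Prod>i\<in>S. P i) \<and>
         hom_part u (\<Sum>i\<in>S. e i) (\<Prod>i\<in>S. P i) = (\<Prod>i\<in>S. hom_part u (e i) (P i))"
  using assms
proof (induction S rule: finite_induct)
  case (insert x F)
  then have IH: "wdeg_le u (\<Sum>i\<in>F. e i) (\<Prod>i\<in>F. P i)"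
      "hom_part u (\<Sum>i\<in>F. e i) (\<Prod>i\<in>F. P i) = (\<Prod>i\<in>F. hom_part u (e i) (P i))"
    and x: "wdeg_le u (e x) (P x)"
    by auto
  show ?case
    using insert.hyps hom_part_mult[OF x IH(1)] wdeg_le_mult[OF x IH(1)] IH(2) by simp
qed simp

lemma hom_part_mon_subst:
  fixes f :: "nat \<Rightarrow> 'a::comm_ring_1 mpoly"
  assumes "\<And>i. i \<in> Poly_Mapping.keys m \<Longrightarrow> wdeg_le u (d i) (f i)"
  shows "wdeg_le u (wdeg d m) (mon_subst f m) \<and>
         hom_part u (wdeg d m) (mon_subst f m) = mon_subst (\<lambda>i. hom_part u (d i) (f i)) m"
proof -
  have "wdeg d m = (\<Sum>i\<in>Poly_Mapping.keys m. Poly_Mapping.lookup m i * d i)"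
    by (simp add: wdeg_def mult.commute)
  moreover have "(\<Prod>i\<in>Poly_Mapping.keys m.
      hom_part u (Poly_Mapping.lookup m i * d i) (f i ^ Poly_Mapping.lookup m i))
    = mon_subst (\<lambda>i. hom_part u (d i) (f i)) m"
    unfolding mon_subst_def by (intro prod.cong refl hom_part_power[THEN conjunct2] assms)
  ultimately show ?thesis
    unfolding mon_subst_def
    using hom_part_prod[of "Poly_Mapping.keys m" u "\<lambda>i. Poly_Mapping.lookup m i * d i"
        "\<lambda>i. f i ^ Poly_Mapping.lookup m i"]
    by (simp add: assms hom_part_power)
qed

lemma wdeg_le_0_mpoly_subst:
  assumes "\<And>i. i \<in> mpoly_vars Q \<Longrightarrow> wdeg_le u 0 (g i)"
  shows "wdeg_le u 0 (mpoly_subst Q g)"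
  unfolding mpoly_subst_eq_sum_mon_subst
proof (rule wdeg_le_sum)
  fix m assume m: "m \<in> Poly_Mapping.keys Q"
  have "wdeg_le u (wdeg (\<lambda>_. 0) m) (mon_subst g m)"
    by (rule hom_part_mon_subst[THEN conjunct1]) (use assms m in \<open>auto simp: mpoly_vars_def\<close>)
  then have "wdeg_le u (0 + 0) (mpoly_const (Poly_Mapping.lookup Q m) * mon_subst g m)"
    by (intro wdeg_le_mult) (simp_all add: wdeg_def)
  then show "wdeg_le u 0 (mpoly_const (Poly_Mapping.lookup Q m) * mon_subst g m)"
    by simp
qed

lemma hom_part_mpoly_subst:
  fixes f :: "nat \<Rightarrow> 'a::comm_ring_1 mpoly"
  assumes Q: "wdeg_le d D Q"
    and f: "\<And>i. i \<in> mpoly_vars Q \<Longrightarrow> wdeg_le u (d i) (f i)"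
  shows "hom_part u D (mpoly_subst Q f) = mpoly_subst (hom_part d D Q) (\<lambda>i. hom_part u (d i) (f i))"
proof -
  let ?top = "\<lambda>i. hom_part u (d i) (f i)"
  have "hom_part u D (mpoly_const (Poly_Mapping.lookup Q m) * mon_subst f m) =
     (if wdeg d m = D then mpoly_const (Poly_Mapping.lookup Q m) * mon_subst ?top m else 0)"
    if m: "m \<in> Poly_Mapping.keys Q" for m
  proof -
    have mon: "wdeg_le u (wdeg d m) (mon_subst f m) \<and>
        hom_part u (wdeg d m) (mon_subst f m) = mon_subst ?top m"
      by (rule hom_part_mon_subst) (use f m in \<open>auto simp: mpoly_vars_def\<close>)
    have "wdeg_le u (0 + wdeg d m) (mpoly_const (Poly_Mapping.lookup Q m) * mon_subst f m)"
      using mon by (intro wdeg_le_mult) simp_all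
    moreover have "wdeg d m \<le> D"
      using Q m by (simp add: wdeg_le_def)
    moreover have "hom_part u (0 + wdeg d m) (mpoly_const (Poly_Mapping.lookup Q m) * mon_subst f m)
        = mpoly_const (Poly_Mapping.lookup Q m) * mon_subst ?top m"
      using hom_part_mult[OF wdeg_le_const mon[THEN conjunct1]] mon by simp
    ultimately show ?thesis
      by (cases "wdeg d m = D") (simp_all add: hom_part_eq_0_if_wdeg_le[of u "wdeg d m"])
  qed
  then have "hom_part u D (mpoly_subst Q f) = (\<Sum>m\<in>Poly_Mapping.keys Q.
      if wdeg d m = D then mpoly_const (Poly_Mapping.lookup Q m) * mon_subst ?top m else 0)"
    by (simp add: mpoly_subst_eq_sum_mon_subst[of Q] hom_part_sum)
  also have "\<dots> = mpoly_subst (hom_part d D Q) ?top"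
    by (simp add: hom_part_eq_sum_single[of d D Q] mpoly_subst_sum, intro sum.cong refl)
       (simp add: mpoly_subst_single)
  finally show ?thesis .
qed

section \<open>Leading forms and algebraic independence\<close>

lemma mpoly_vars_mpoly_var: "mpoly_vars (mpoly_var i :: 'a::comm_ring_1 mpoly) = {i}"
  by (simp add: mpoly_vars_def keys_mpoly_var)

lemma mpoly_vars_mpoly_subst:
  "mpoly_vars (mpoly_subst Q g) \<subseteq> (\<Union>i\<in>mpoly_vars Q. mpoly_vars (g i))"
proof -
  let ?A = "\<Union>i\<in>mpoly_vars Q. mpoly_vars (g i)"
  have "wdeg_le (\<lambda>j. if j \<in> ?A then 0 else 1) 0 (g i)" if "i \<in> mpoly_vars Q" for i
    using that by (subst mpoly_vars_subset_iff_wdeg_le[symmetric]) blast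
  then show ?thesis
    unfolding mpoly_vars_subset_iff_wdeg_le by (rule wdeg_le_0_mpoly_subst)
qed

lemma not_in_mpoly_vars_if_wdeg_le:
  assumes "wdeg_le u e p" "e < u k"
  shows "k \<notin> mpoly_vars p"
proof
  assume "k \<in> mpoly_vars p"
  then obtain m where "m \<in> Poly_Mapping.keys p" "k \<in> Poly_Mapping.keys m"
    by (auto simp: mpoly_vars_def)
  then have "u k \<le> e"
    using assms(1) weight_le_wdeg[of k m u] by (auto simp: wdeg_le_def)
  with assms(2) show False by simp
qed

lemma mon_deg_eq_wdeg: "mon_deg = wdeg (\<lambda>_. 1)"
  by (rule ext) (simp add: mon_deg_def wdeg_def)

lemma top_component_eq_hom_part: "top_component p = hom_part (\<lambda>_. 1) (total_degree p) p"
  by (simp add: top_component_def hom_part_def mon_deg_eq_wdeg)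

lemma mon_deg_le_total_degree: "m \<in> Poly_Mapping.keys p \<Longrightarrow> mon_deg m \<le> total_degree p"
  unfolding total_degree_def by (auto intro: Max_ge)

lemma wdeg_le_total_degree: "wdeg_le (\<lambda>_. 1) (total_degree p) p"
  unfolding wdeg_le_def mon_deg_eq_wdeg[symmetric] by (auto intro: mon_deg_le_total_degree)

lemma mon_deg_eq_0_iff [simp]: "mon_deg m = 0 \<longleftrightarrow> m = 0"
  by (simp add: mon_deg_eq_wdeg wdeg_eq_0_iff)

lemma total_degree_eq_0_imp_const:
  assumes "total_degree p = 0"
  shows "p = mpoly_const (Poly_Mapping.lookup p 0)"
proof (rule poly_mapping_eqI)
  fix m
  have "m = 0" if "m \<in> Poly_Mapping.keys p"
    using mon_deg_le_total_degree[OF that] assms by simp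
  then show "Poly_Mapping.lookup p m = Poly_Mapping.lookup (mpoly_const (Poly_Mapping.lookup p 0)) m"
    by (cases "m = 0") (auto simp: lookup_mpoly_const in_keys_iff)
qed

lemma top_component_if_total_degree_eq_1:
  assumes deg: "total_degree p = 1"
  shows "top_component p = p - mpoly_const (Poly_Mapping.lookup p 0)"
proof (rule poly_mapping_eqI)
  fix m
  have "mon_deg m = 1" if "m \<in> Poly_Mapping.keys p" "m \<noteq> 0"
    using mon_deg_le_total_degree[OF that(1)] that(2) deg by (simp add: le_Suc_eq)
  then show "Poly_Mapping.lookup (top_component p) m =
      Poly_Mapping.lookup (p - mpoly_const (Poly_Mapping.lookup p 0)) m"
    unfolding top_component_eq_hom_part deg mon_deg_eq_wdeg
    by (cases "m = 0") (auto simp: lookup_hom_part lookup_minus lookup_mpoly_const in_keys_iff)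
qed

definition algebraically_independent :: "nat \<Rightarrow> (nat \<Rightarrow> 'a::comm_ring_1 mpoly) \<Rightarrow> bool" where
  "algebraically_independent n h \<longleftrightarrow>
     (\<forall>Q. mpoly_vars Q \<subseteq> {..<n} \<and> mpoly_subst Q h = 0 \<longrightarrow> Q = 0)"

lemma algebraically_independent_cong:
  assumes "\<And>i. i < n \<Longrightarrow> h i = h' i"
  shows "algebraically_independent n h \<longleftrightarrow> algebraically_independent n h'"
proof -
  have "mpoly_subst Q h = mpoly_subst Q h'" if "mpoly_vars Q \<subseteq> {..<n}" for Q
    using that assms by (intro mpoly_subst_cong) auto
  then show ?thesis
    unfolding algebraically_independent_def by (metis (no_types, lifting))
qed

lemma poly_automorphism_algebraically_independent:
  assumes "poly_automorphism n f"
  shows "algebraically_independent n f"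
  unfolding algebraically_independent_def
proof (intro allI impI, elim conjE)
  fix Q assume Q: "mpoly_vars Q \<subseteq> {..<n}" and Qf: "mpoly_subst Q f = 0"
  from assms obtain g where fg: "\<And>i. i < n \<Longrightarrow> mpoly_subst (f i) g = mpoly_var i"
    unfolding poly_automorphism_def by blast
  have "Q = mpoly_subst Q (\<lambda>i. mpoly_subst (f i) g)"
    using Q fg by (subst mpoly_subst_cong[where g' = mpoly_var]) auto
  also have "\<dots> = 0"
    by (simp add: mpoly_subst_mpoly_subst[symmetric] Qf)
  finally show "Q = 0" .
qed

lemma algebraically_independent_nonconstant:
  assumes "algebraically_independent n h" "j < n"
  shows "h j \<noteq> mpoly_const c"
proof
  assume hj: "h j = mpoly_const c"
  define Q where "Q = mpoly_var j - mpoly_const c"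
  have "mpoly_vars Q \<subseteq> {..<n}"
    unfolding Q_def mpoly_vars_subset_iff_wdeg_le
    using assms(2) by (intro wdeg_le_diff) (auto intro: wdeg_le_mono[OF wdeg_le_var])
  moreover have "mpoly_subst Q h = 0"
    by (simp add: Q_def mpoly_subst_diff hj)
  ultimately have "Q = 0"
    using assms(1) by (simp add: algebraically_independent_def)
  have "Poly_Mapping.single j (1::nat) \<noteq> 0"
    by (metis lookup_single_eq lookup_zero one_neq_zero)
  then have "Poly_Mapping.lookup Q (Poly_Mapping.single j 1) = 1"
    by (simp add: Q_def lookup_minus lookup_mpoly_const mpoly_var_def)
  with \<open>Q = 0\<close> show False by simp
qed

text \<open>Translation is an invertible substitution: \<open>Q(h - c) = R(h)\<close> with \<open>R = Q(x - c)\<close>, and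
  \<open>Q = R(x + c)\<close>.\<close>

lemma algebraically_independent_translate:
  assumes "algebraically_independent n h"
  shows "algebraically_independent n (\<lambda>i. h i - mpoly_const (c i))"
  unfolding algebraically_independent_def
proof (intro allI impI, elim conjE)
  fix Q assume Q: "mpoly_vars Q \<subseteq> {..<n}" and Q0: "mpoly_subst Q (\<lambda>i. h i - mpoly_const (c i)) = 0"
  define R where "R = mpoly_subst Q (\<lambda>i. mpoly_var i - mpoly_const (c i))"
  have "mpoly_vars (mpoly_var i - mpoly_const (c i)) \<subseteq> {i}" for i
    unfolding mpoly_vars_subset_iff_wdeg_le by (intro wdeg_le_diff) (auto intro: wdeg_le_mono[OF wdeg_le_var])
  then have "mpoly_vars R \<subseteq> {..<n}"
    using Q mpoly_vars_mpoly_subst[of Q] unfolding R_def by blast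
  moreover have "mpoly_subst R h = 0"
    using Q0 by (simp add: R_def mpoly_subst_mpoly_subst mpoly_subst_diff)
  ultimately have "R = 0"
    using assms by (simp add: algebraically_independent_def)
  have "Q = mpoly_subst R (\<lambda>i. mpoly_var i + mpoly_const (c i))"
    by (simp add: R_def mpoly_subst_mpoly_subst mpoly_subst_diff)
  then show "Q = 0"
    using \<open>R = 0\<close> by simp
qed

lemma wdeg_le_if_algebraically_independent_hom_parts:
  assumes indep: "algebraically_independent n (\<lambda>j. hom_part u (d j) (f j))"
    and f: "\<And>j. j < n \<Longrightarrow> wdeg_le u (d j) (f j)"
    and Q: "mpoly_vars Q \<subseteq> {..<n}"
    and Qf: "wdeg_le u e (mpoly_subst Q f)"
  shows "wdeg_le d e Q"
proof (rule ccontr)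
  assume not_le: "\<not> wdeg_le d e Q"
  define D where "D = Max (wdeg d ` Poly_Mapping.keys Q)"
  have D: "wdeg_le d D Q"
    by (simp add: wdeg_le_def D_def)
  have "D \<in> wdeg d ` Poly_Mapping.keys Q"
    using not_le unfolding D_def wdeg_le_def by (intro Max_in) auto
  then obtain m where m: "m \<in> Poly_Mapping.keys Q" "wdeg d m = D"
    by blast
  have "e < D"
    using not_le D by (force simp: wdeg_le_def)
  then have "mpoly_subst (hom_part d D Q) (\<lambda>j. hom_part u (d j) (f j)) = 0"
    using hom_part_mpoly_subst[OF D, of u f] hom_part_eq_0_if_wdeg_le[OF Qf] f Q by auto
  moreover have "mpoly_vars (hom_part d D Q) \<subseteq> {..<n}"
    using Q keys_hom_part_subset[of d D Q] unfolding mpoly_vars_def by blast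
  ultimately have "hom_part d D Q = 0"
    using indep by (simp add: algebraically_independent_def)
  then show False
    using m lookup_hom_part[of d D Q m] by (simp add: in_keys_iff)
qed

lemma total_degree_eq_1_if_algebraically_independent_top_components:
  assumes aut: "poly_automorphism n f"
    and indep: "algebraically_independent n (\<lambda>i. top_component (f i))"
    and k: "k < n"
  shows "total_degree (f k) = 1"
proof -
  from aut obtain g where fv: "\<And>i. i < n \<Longrightarrow> mpoly_vars (f i) \<subseteq> {..<n}"
    and gv: "\<And>i. i < n \<Longrightarrow> mpoly_vars (g i) \<subseteq> {..<n}"
    and gf: "\<And>i. i < n \<Longrightarrow> mpoly_subst (g i) f = mpoly_var i"
    and fg: "\<And>i. i < n \<Longrightarrow> mpoly_subst (f i) g = mpoly_var i"
    unfolding poly_automorphism_def by blast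
  define d where "d j = total_degree (f j)" for j
  have "d k \<noteq> 0"
  proof
    assume "d k = 0"
    then have "top_component (f k) = mpoly_const (Poly_Mapping.lookup (f k) 0)"
      using total_degree_eq_0_imp_const[of "f k"]
      by (metis d_def hom_part_const top_component_eq_hom_part)
    with algebraically_independent_nonconstant[OF indep k] show False by blast
  qed
  moreover have "d k \<le> 1"
  proof (rule ccontr)
    assume "\<not> d k \<le> 1"
    have "wdeg_le d 1 (g i)" if "i < n" for i
    proof (rule wdeg_le_if_algebraically_independent_hom_parts)
      show "algebraically_independent n (\<lambda>j. hom_part (\<lambda>_. 1) (d j) (f j))"
        using indep by (simp add: d_def top_component_eq_hom_part)
      show "wdeg_le (\<lambda>_. 1) 1 (mpoly_subst (g i) f)"
        using gf[OF that] wdeg_le_var[of "\<lambda>_. 1" i] by simp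
    qed (use gv that wdeg_le_total_degree in \<open>auto simp: d_def\<close>)
    then have "k \<notin> mpoly_vars (g i)" if "i < n" for i
      using that \<open>\<not> d k \<le> 1\<close> by (intro not_in_mpoly_vars_if_wdeg_le[of d 1]) auto
    moreover have "k \<in> (\<Union>i\<in>mpoly_vars (f k). mpoly_vars (g i))"
      using mpoly_vars_mpoly_subst[of "f k" g] fg[OF k] by (simp add: mpoly_vars_mpoly_var)
    ultimately show False
      using fv[OF k] by blast
  qed
  ultimately show ?thesis
    by (simp add: d_def)
qed

lemma algebraically_independent_top_components_if_total_degree_eq_1:
  assumes "poly_automorphism n f" "\<forall>i<n. total_degree (f i) = 1"
  shows "algebraically_independent n (\<lambda>i. top_component (f i))"
proof -
  have "algebraically_independent n (\<lambda>i. f i - mpoly_const (Poly_Mapping.lookup (f i) 0))"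
    by (intro algebraically_independent_translate poly_automorphism_algebraically_independent assms)
  then show ?thesis
    using assms(2) by (subst algebraically_independent_cong) (simp_all add: top_component_if_total_degree_eq_1)
qed

theorem corollary4:
  fixes n :: nat and f :: "nat \<Rightarrow> 'a::{alg_closed_field, field_char_0} mpoly"
  assumes "poly_automorphism n f"
  shows "(\<forall>Q. mpoly_vars Q \<subseteq> {..<n} \<and> mpoly_subst Q (\<lambda>i. top_component (f i)) = 0 \<longrightarrow> Q = 0)
         \<longleftrightarrow> (\<forall>i<n. total_degree (f i) = 1)"
  using total_degree_eq_1_if_algebraically_independent_top_components[OF assms]
    algebraically_independent_top_components_if_total_degree_eq_1[OF assms]
  unfolding algebraically_independent_def by blast

end
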